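(* Let $s>0$ and let $c$ be a constant. Suppose $g\in C^1[s,\infty)$ satisfies $$g'(t)=-g(t)+\frac1t\int_s^t g(\xi)\,d\xi+\frac ct,\qquad t\in[s,\infty).$$ Then for all $t\ge s$, $$g(t)=g'(s)\,s\,e^{s}\,I(t,s)+g(s),$$ where $g'(s)=-g(s)+c\,s^{-1}$.
   Context: $I(t,s)=\int_s^t \frac{e^{-\xi}}{\xi}\,d\xi$. *)

theory Defs
  imports "HOL-Analysis.Analysis"
begin

definition I :: "real \<Rightarrow> real \<Rightarrow> real" where
  "I t s = integral {s..t} (\<lambda>\<xi>. exp (- \<xi>) / \<xi>)"

end

theory Submission
  imports Defs
begin

text \<open>Multiplying the equation by \<open>t\<close> shows that \<open>H(t) = t g'(t) = -t g(t) + \<integral>\<^sub>s\<^sup>t g + c\<close>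
  satisfies \<open>H' = -g - t g' + g = -H\<close>. Hence \<open>t g'(t) = s g'(s) exp (s - t)\<close>, and integrating
  this expression for \<open>g'\<close> from \<open>s\<close> to \<open>t\<close> gives the formula.\<close>

lemma linear_ode_exp_solution:
  fixes H :: "real \<Rightarrow> real"
  assumes deriv: "\<And>t. t \<in> {a..b} \<Longrightarrow> (H has_real_derivative k * H t) (at t within {a..b})"
    and t: "t \<in> {a..b}"
  shows "H t = H a * exp (k * (t - a))"
proof -
  have "((\<lambda>u. H u * exp (- k * u)) has_real_derivative 0) (at u within {a..b})"
    if "u \<in> {a..b}" for u
    by (rule derivative_eq_intros deriv[OF that] refl)+ (simp add: algebra_simps)
  with convex_real_interval(5) have "\<exists>K. \<forall>u\<in>{a..b}. H u * exp (- k * u) = K"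
    by (rule has_field_derivative_zero_constant)
  then obtain K where K: "\<And>u. u \<in> {a..b} \<Longrightarrow> H u * exp (- k * u) = K"
    by blast
  have "a \<in> {a..b}" using t by simp
  from K[OF t] K[OF this] have "H t * exp (- k * t) = H a * exp (- k * a)" by simp
  then have "H t * exp (- k * t) * exp (k * t) = H a * exp (- k * a) * exp (k * t)" by simp
  then show ?thesis
    by (simp add: mult.assoc mult_exp_exp algebra_simps)
qed

lemma has_integral_I:
  assumes "0 < s" "s \<le> t"
  shows "((\<lambda>\<xi>. exp (- \<xi>) / \<xi>) has_integral I t s) {s..t}"
proof -
  have "continuous_on {s..t} (\<lambda>\<xi>. exp (- \<xi>) / \<xi>)"
    using assms by (intro continuous_intros) auto
  then show ?thesis
    unfolding I_def by (intro integrable_integral integrable_continuous_interval)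
qed

lemma integro_differential_derivative_closed_form:
  fixes g g' :: "real \<Rightarrow> real"
  assumes s_pos: "0 < s"
    and deriv: "\<And>u. u \<in> {s..T} \<Longrightarrow> (g has_real_derivative g' u) (at u within {s..T})"
    and ode: "\<And>u. u \<in> {s..T} \<Longrightarrow> g' u = - g u + (1 / u) * integral {s..u} g + c / u"
    and t: "t \<in> {s..T}"
  shows "g' t = g' s * s * exp s * (exp (- t) / t)"
proof -
  define H where "H u = - u * g u + integral {s..u} g + c" for u
  have H_eq: "H u = u * g' u" if "u \<in> {s..T}" for u
    using ode[OF that] that s_pos by (simp add: H_def field_simps)
  have g_cont: "continuous_on {s..T} g"
    using deriv by (rule DERIV_continuous_on)
  have "(H has_real_derivative - 1 * H u) (at u within {s..T})" if u: "u \<in> {s..T}" for u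
  proof -
    have "(H has_real_derivative - (u * g' u)) (at u within {s..T})"
      unfolding H_def
      by (rule derivative_eq_intros deriv[OF u] integral_has_real_derivative[OF g_cont u] refl)+ simp
    then show ?thesis
      using H_eq[OF u] by simp
  qed
  from linear_ode_exp_solution[OF this t] have "H t = H s * exp (- (t - s))"
    by simp
  also have "\<dots> = s * g' s * exp s * exp (- t)"
    using t by (simp add: H_eq mult_exp_exp)
  finally show ?thesis
    using t s_pos H_eq[OF t] by (simp add: field_simps)
qed

theorem lemma1:
  fixes g g' :: "real \<Rightarrow> real" and s c :: real
  assumes s_pos: "s > 0"
    and deriv: "\<And>t. t \<ge> s \<Longrightarrow> (g has_real_derivative g' t) (at t within {s..})"
    and cont: "continuous_on {s..} g'"
    and ode: "\<And>t. t \<ge> s \<Longrightarrow> g' t = - g t + (1 / t) * integral {s..t} g + c / t"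
  shows "g' s = - g s + c / s
    \<and> (\<forall>t\<ge>s. g t = g' s * s * exp s * I t s + g s)"
proof
  show "g' s = - g s + c / s" using ode[of s] by simp
  show "\<forall>t\<ge>s. g t = g' s * s * exp s * I t s + g s"
  proof (intro allI impI)
    fix T assume "s \<le> T"
    have deriv_T: "(g has_real_derivative g' t) (at t within {s..T})" if "t \<in> {s..T}" for t
      using that by (intro has_field_derivative_subset[OF deriv]) auto
    have ode_T: "g' t = - g t + (1 / t) * integral {s..t} g + c / t" if "t \<in> {s..T}" for t
      using that by (simp add: ode)
    have "(g' has_integral g T - g s) {s..T}"
      using \<open>s \<le> T\<close> deriv_T
      by (intro fundamental_theorem_of_calculus) (simp_all add: has_real_derivative_iff_has_vector_derivative)
    moreover have "(g' has_integral g' s * s * exp s * I T s) {s..T}"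
    proof (rule has_integral_eq[rotated])
      show "((\<lambda>t. g' s * s * exp s * (exp (- t) / t)) has_integral g' s * s * exp s * I T s) {s..T}"
        using has_integral_I[OF s_pos \<open>s \<le> T\<close>] by (rule has_integral_mult_right)
      show "g' s * s * exp s * (exp (- t) / t) = g' t" if "t \<in> {s..T}" for t
        using integro_differential_derivative_closed_form[OF s_pos deriv_T ode_T that] by simp
    qed
    ultimately have "g T - g s = g' s * s * exp s * I T s"
      by (rule has_integral_unique)
    then show "g T = g' s * s * exp s * I T s + g s"
      by simp
  qed
qed

end
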